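(* Let $S\subseteq\mathbb{R}^n$ be a differential subspace and $x\in S$. Let $R(S)=\{f|_S\colon f\in C^\infty(\mathbb{R}^n)\}$. Then every derivation of $R(S)$ at $x$ extends to a unique derivation of $C^\infty(S)$ at $x$.
   Context: For $S\subseteq\mathbb{R}^n$, $C^\infty(S)$ consists of functions $f\colon S\to\mathbb{R}$ such that for each $x\in S$ there is a neighbourhood $U$ of $x$ in $\mathbb{R}^n$ and $f_x\in C^\infty(\mathbb{R}^n)$ with $f|_{U\cap S}=f_x|_{U\cap S}$; $R(S)\subseteq C^\infty(S)$. For a ring $A$ of real functions on $S$ (here $A=R(S)$ or $C^\infty(S)$), a derivation of $A$ at $x$ is a linear map $u\colon A\to\mathbb{R}$ satisfying $u(fh)=u(f)h(x)+f(x)u(h)$ for all $f,h\in A$. *)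

theory Defs
  imports "HOL-Analysis.Analysis"
begin

fun Ck :: "nat \<Rightarrow> ('a::euclidean_space \<Rightarrow> real) \<Rightarrow> bool" where
  "Ck 0 f = continuous_on UNIV f"
| "Ck (Suc k) f = ((\<forall>x. f differentiable (at x)) \<and>
                    (\<forall>v. Ck k (\<lambda>x. frechet_derivative f (at x) v)))"

definition smooth :: "('a::euclidean_space \<Rightarrow> real) \<Rightarrow> bool" where
  "smooth f = (\<forall>k. Ck k f)"

text \<open>Real functions on S are represented as functions on the whole space that
  vanish outside S (so the representation is canonical and closed under the
  ring operations).\<close>

definition RS :: "'a::euclidean_space set \<Rightarrow> ('a \<Rightarrow> real) set" where
  "RS S = {(\<lambda>y. if y \<in> S then g y else 0) | g. smooth g}"

definition Cinf_on :: "'a::euclidean_space set \<Rightarrow> ('a \<Rightarrow> real) set" where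
  "Cinf_on S = {f. (\<forall>y. y \<notin> S \<longrightarrow> f y = 0) \<and>
     (\<forall>x\<in>S. \<exists>U. open U \<and> x \<in> U \<and>
        (\<exists>g. smooth g \<and> (\<forall>y\<in>U \<inter> S. f y = g y)))}"

definition derivation_at ::
  "('a \<Rightarrow> real) set \<Rightarrow> 'a \<Rightarrow> (('a \<Rightarrow> real) \<Rightarrow> real) \<Rightarrow> bool" where
  "derivation_at A x u =
     ((\<forall>f\<in>A. \<forall>h\<in>A. u (\<lambda>y. f y + h y) = u f + u h) \<and>
      (\<forall>c. \<forall>f\<in>A. u (\<lambda>y. c * f y) = c * u f) \<and>
      (\<forall>f\<in>A. \<forall>h\<in>A. u (\<lambda>y. f y * h y) = u f * h x + f x * u h))"

end

theory Submission
  imports Defs "HOL-Computational_Algebra.Polynomial"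
begin

text \<open>
  A derivation at \<open>x\<close> only sees germs: if \<open>f\<close> vanishes on \<open>U \<inter> S\<close> for a neighbourhood \<open>U\<close>
  of \<open>x\<close>, multiply by (the restriction of) a smooth bump \<open>\<phi>\<close> with \<open>\<phi> x > 0\<close> supported in \<open>U\<close>;
  then \<open>\<phi> f = 0\<close> and the Leibniz rule gives \<open>0 = \<phi>(x) u(f)\<close>. Every \<open>f \<in> C\<^sup>\<infinity>(S)\<close> agrees near
  \<open>x\<close> with the restriction of a smooth \<open>g\<close>, so \<open>w(f) := u(g|\<^sub>S)\<close> is well defined, is a derivation,
  and is forced on any extension of \<open>u\<close>.
\<close>

lemma Ck_SucD: "Ck (Suc k) f \<Longrightarrow> Ck k f"
proof (induction k arbitrary: f)
  case 0
  then show ?case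
    by (auto intro!: continuous_at_imp_continuous_on differentiable_imp_continuous_within)
qed simp

lemma frechet_derivative_at_apply:
  "(f has_derivative f') (at y) \<Longrightarrow> frechet_derivative f (at y) v = f' v"
  by (metis frechet_derivative_at)

lemma Ck_const: "Ck k (\<lambda>y. c)"
  by (induction k arbitrary: c) auto

lemma Ck_add: "Ck k f \<Longrightarrow> Ck k g \<Longrightarrow> Ck k (\<lambda>y. f y + g y)"
proof (induction k arbitrary: f g)
  case 0
  then show ?case by (auto intro: continuous_on_add)
next
  case (Suc k)
  then have df: "(f has_derivative frechet_derivative f (at y)) (at y)"
    and dg: "(g has_derivative frechet_derivative g (at y)) (at y)" for y
    by (auto simp: frechet_derivative_works)
  have "frechet_derivative (\<lambda>y. f y + g y) (at y) v
      = frechet_derivative f (at y) v + frechet_derivative g (at y) v" for y v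
    using frechet_derivative_at_apply[OF has_derivative_add[OF df dg]] by simp
  then show ?case
    using Suc by (auto intro: differentiable_add)
qed

lemma Ck_mult: "Ck k f \<Longrightarrow> Ck k g \<Longrightarrow> Ck k (\<lambda>y. f y * g y)"
proof (induction k arbitrary: f g)
  case 0
  then show ?case by (auto intro: continuous_on_mult)
next
  case (Suc k)
  then have df: "(f has_derivative frechet_derivative f (at y)) (at y)"
    and dg: "(g has_derivative frechet_derivative g (at y)) (at y)" for y
    by (auto simp: frechet_derivative_works)
  have "frechet_derivative (\<lambda>y. f y * g y) (at y) v
      = f y * frechet_derivative g (at y) v + frechet_derivative f (at y) v * g y" for y v
    using frechet_derivative_at_apply[OF has_derivative_mult[OF df dg]] by simp
  moreover have "Ck k f" "Ck k g"
    using Suc.prems Ck_SucD by blast+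
  ultimately show ?case
    using Suc by (auto intro!: differentiable_mult Ck_add)
qed

lemma Ck_inner_affine: "Ck k (\<lambda>y. inner y a + c)"
proof (cases k)
  case 0
  then show ?thesis by (auto intro!: continuous_intros)
next
  case (Suc m)
  have d: "((\<lambda>y. inner y a + c) has_derivative (\<lambda>v. inner v a)) (at y)" for y
    by (auto intro!: derivative_eq_intros)
  have "frechet_derivative (\<lambda>y. inner y a + c) (at y) v = inner v a" for y v
    by (rule frechet_derivative_at_apply[OF d])
  then show ?thesis
    using d Suc by (auto simp: Ck_const differentiable_def)
qed

lemma Ck_const_minus_inner_self: "Ck k (\<lambda>y. c - inner (y - x) (y - x))"
proof (cases k)
  case 0
  then show ?thesis by (auto intro!: continuous_intros)
next
  case (Suc m)
  have d: "((\<lambda>y. c - inner (y - x) (y - x))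
      has_derivative (\<lambda>v. - (inner (y - x) v + inner v (y - x)))) (at y)" for y
    by (auto intro!: derivative_eq_intros)
  have "(\<lambda>y. frechet_derivative (\<lambda>y. c - inner (y - x) (y - x)) (at y) v)
      = (\<lambda>y. inner y (-2 *\<^sub>R v) + 2 * inner x v)" for v
    using frechet_derivative_at_apply[OF d] by (auto simp: inner_diff_left inner_diff_right inner_commute)
  then show ?thesis
    unfolding Suc Ck.simps using d Ck_inner_affine differentiable_def by metis
qed

lemma Ck_compose_real:
  assumes "\<And>n t. (D n has_real_derivative D (Suc n) t) (at t)" and "Ck k q"
  shows "Ck k (\<lambda>y. D 0 (q y))"
  using assms
proof (induction k arbitrary: D q)
  case 0
  then have "continuous_on UNIV (D 0)"
    by (meson DERIV_isCont continuous_at_imp_continuous_on)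
  then show ?case
    using 0 by (auto intro: continuous_on_compose2[of UNIV "D 0" UNIV q])
next
  case (Suc k)
  then have dq: "(q has_derivative frechet_derivative q (at y)) (at y)" for y
    by (auto simp: frechet_derivative_works)
  have d: "((\<lambda>y. D 0 (q y)) has_derivative (\<lambda>v. D 1 (q y) * frechet_derivative q (at y) v)) (at y)" for y
    using has_derivative_compose[OF dq has_field_derivative_imp_has_derivative[OF Suc.prems(1)]]
    by simp
  have "Ck k (\<lambda>y. D 1 (q y))"
    using Suc.IH[of "\<lambda>n. D (Suc n)" q] Suc.prems Ck_SucD by auto
  then show ?case
    using d Suc.prems by (auto simp: frechet_derivative_at_apply[OF d] differentiable_def intro!: Ck_mult)
qed

lemma smooth_const: "smooth (\<lambda>y. c)"
  by (simp add: smooth_def Ck_const)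

lemma smooth_add: "smooth f \<Longrightarrow> smooth g \<Longrightarrow> smooth (\<lambda>y. f y + g y)"
  by (simp add: smooth_def Ck_add)

lemma smooth_mult: "smooth f \<Longrightarrow> smooth g \<Longrightarrow> smooth (\<lambda>y. f y * g y)"
  by (simp add: smooth_def Ck_mult)

lemma smooth_scaleR: "smooth g \<Longrightarrow> smooth (\<lambda>y. c * g y)"
  using smooth_mult[OF smooth_const] by blast

lemma smooth_diff: "smooth f \<Longrightarrow> smooth g \<Longrightarrow> smooth (\<lambda>y. f y - g y)"
  using smooth_add[OF _ smooth_scaleR[of g "-1"]] by simp

section \<open>Smooth bump functions\<close>

lemma poly_times_exp_neg_tendsto_0: "((\<lambda>s. poly p s * exp (-s)) \<longlongrightarrow> (0::real)) at_top"
proof -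
  have "((\<lambda>s. \<Sum>i\<le>degree p. coeff p i * (s ^ i / exp s)) \<longlongrightarrow> 0) at_top"
    by (intro tendsto_null_sum tendsto_mult_right_zero tendsto_power_div_exp_0)
  moreover have "(\<lambda>s. \<Sum>i\<le>degree p. coeff p i * (s ^ i / exp s)) = (\<lambda>s. poly p s * exp (-s))"
    by (auto simp: poly_altdef sum_distrib_right sum_divide_distrib exp_minus field_simps)
  ultimately show ?thesis by simp
qed

text \<open>\<open>exp_inv_deriv n\<close> is the \<open>n\<close>-th derivative of \<open>t \<mapsto> exp (-1/t)\<close> (extended by \<open>0\<close> on
  \<open>t \<le> 0\<close>), of the form \<open>p\<^sub>n(1/t) exp (-1/t)\<close>: differentiating \<open>p(1/t) exp (-1/t)\<close> gives
  \<open>s\<^sup>2 (p(s) - p'(s)) exp (-s)\<close> with \<open>s = 1/t\<close>.\<close>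

fun exp_inv_poly :: "nat \<Rightarrow> real poly" where
  "exp_inv_poly 0 = 1"
| "exp_inv_poly (Suc n) = [:0, 0, 1:] * (exp_inv_poly n - pderiv (exp_inv_poly n))"

definition exp_inv_deriv :: "nat \<Rightarrow> real \<Rightarrow> real" where
  "exp_inv_deriv n t = (if 0 < t then poly (exp_inv_poly n) (inverse t) * exp (- inverse t) else 0)"

lemma exp_inv_deriv_pos:
  assumes "t > 0"
  shows "(exp_inv_deriv n has_real_derivative exp_inv_deriv (Suc n) t) (at t)"
proof -
  have "((\<lambda>t. poly (exp_inv_poly n) (inverse t) * exp (- inverse t))
      has_real_derivative exp_inv_deriv (Suc n) t) (at t)"
    using assms
    by (auto intro!: derivative_eq_intros DERIV_chain2[OF poly_DERIV]
        simp: exp_inv_deriv_def field_simps power2_eq_square)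
  then show ?thesis
    by (rule has_field_derivative_transform_within_open[where S="{0<..}"])
      (use assms in \<open>auto simp: exp_inv_deriv_def\<close>)
qed

lemma exp_inv_deriv_neg:
  assumes "t < 0"
  shows "(exp_inv_deriv n has_real_derivative exp_inv_deriv (Suc n) t) (at t)"
proof -
  have "(exp_inv_deriv n has_real_derivative 0) (at t)"
    by (rule has_field_derivative_transform_within_open[OF DERIV_const, where S="{..<0}"])
      (use assms in \<open>auto simp: exp_inv_deriv_def\<close>)
  then show ?thesis
    using assms by (simp add: exp_inv_deriv_def)
qed

lemma exp_inv_deriv_zero: "(exp_inv_deriv n has_real_derivative exp_inv_deriv (Suc n) 0) (at 0)"
proof -
  let ?q = "\<lambda>y. (exp_inv_deriv n y - exp_inv_deriv n 0) / (y - 0)"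
  have "(?q \<longlongrightarrow> 0) (at_left 0)"
    by (rule tendsto_eventually)
      (auto simp: eventually_at_left_field exp_inv_deriv_def intro!: exI[of _ "-1"])
  moreover have "(?q \<longlongrightarrow> 0) (at_right 0)"
  proof -
    have "((\<lambda>s. poly ([:0, 1:] * exp_inv_poly n) s * exp (-s)) \<longlongrightarrow> 0) at_top"
      by (rule poly_times_exp_neg_tendsto_0)
    then have "((\<lambda>s. ?q (inverse s)) \<longlongrightarrow> 0) at_top"
      by (rule Lim_transform_eventually)
        (use eventually_gt_at_top[of "0::real"] in
          \<open>eventually_elim, auto simp: exp_inv_deriv_def field_simps\<close>)
    then show ?thesis
      by (simp add: filterlim_at_right_to_top)
  qed
  ultimately have "(?q \<longlongrightarrow> 0) (at 0)"
    by (rule filterlim_split_at)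
  then show ?thesis
    by (simp add: has_field_derivative_iff exp_inv_deriv_def)
qed

lemma exp_inv_deriv_has_derivative:
  "(exp_inv_deriv n has_real_derivative exp_inv_deriv (Suc n) t) (at t)"
  using exp_inv_deriv_pos exp_inv_deriv_neg exp_inv_deriv_zero by (cases t "0::real" rule: linorder_cases) auto

lemma smooth_bump:
  fixes x :: "'a::euclidean_space"
  assumes "r > 0"
  obtains \<phi> where "smooth \<phi>" "\<phi> x > 0" "\<And>y. dist y x \<ge> r \<Longrightarrow> \<phi> y = 0"
proof
  let ?\<phi> = "\<lambda>y. exp_inv_deriv 0 (r\<^sup>2 - inner (y - x) (y - x))"
  show "smooth ?\<phi>"
    unfolding smooth_def
    using Ck_compose_real[of exp_inv_deriv, OF exp_inv_deriv_has_derivative Ck_const_minus_inner_self] by blast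
  show "?\<phi> x > 0"
    using assms by (simp add: exp_inv_deriv_def)
  fix y
  assume "dist y x \<ge> r"
  then have "r\<^sup>2 \<le> (norm (y - x))\<^sup>2"
    using assms by (simp add: dist_norm power_mono)
  then show "?\<phi> y = 0"
    by (simp add: exp_inv_deriv_def power2_norm_eq_inner)
qed

definition restrict0 :: "'a set \<Rightarrow> ('a \<Rightarrow> real) \<Rightarrow> 'a \<Rightarrow> real" where
  "restrict0 S g = (\<lambda>y. if y \<in> S then g y else 0)"

definition local_rep :: "'a::euclidean_space set \<Rightarrow> 'a \<Rightarrow> ('a \<Rightarrow> real) \<Rightarrow> ('a \<Rightarrow> real) \<Rightarrow> bool" where
  "local_rep S x f g \<longleftrightarrow> smooth g \<and> (\<exists>U. open U \<and> x \<in> U \<and> (\<forall>y\<in>U \<inter> S. f y = g y))"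

lemma RS_eq: "RS S = restrict0 S ` Collect smooth"
  by (auto simp: RS_def restrict0_def)

lemma restrict0_in_RS: "smooth g \<Longrightarrow> restrict0 S g \<in> RS S"
  by (simp add: RS_eq)

lemma RS_subset_Cinf_on: "RS S \<subseteq> Cinf_on S"
proof
  fix f
  assume "f \<in> RS S"
  then obtain g where "smooth g" "f = restrict0 S g"
    by (auto simp: RS_eq)
  then show "f \<in> Cinf_on S"
    unfolding Cinf_on_def restrict0_def by (auto intro!: exI[of _ UNIV] exI[of _ g])
qed

lemma Cinf_on_diff:
  assumes "f \<in> Cinf_on S" "h \<in> Cinf_on S"
  shows "(\<lambda>y. f y - h y) \<in> Cinf_on S"
proof -
  have "\<exists>U. open U \<and> z \<in> U \<and> (\<exists>g. smooth g \<and> (\<forall>y\<in>U \<inter> S. f y - h y = g y))" if "z \<in> S" for z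
  proof -
    obtain U1 g1 where "open U1" "z \<in> U1" "smooth g1" "\<forall>y\<in>U1 \<inter> S. f y = g1 y"
      using assms(1) \<open>z \<in> S\<close> unfolding Cinf_on_def by blast
    moreover obtain U2 g2 where "open U2" "z \<in> U2" "smooth g2" "\<forall>y\<in>U2 \<inter> S. h y = g2 y"
      using assms(2) \<open>z \<in> S\<close> unfolding Cinf_on_def by blast
    ultimately show ?thesis
      by (intro exI[of _ "U1 \<inter> U2"] exI[of _ "\<lambda>y. g1 y - g2 y"]) (auto intro: smooth_diff)
  qed
  then show ?thesis
    using assms unfolding Cinf_on_def by auto
qed

lemma Cinf_on_local_rep: "f \<in> Cinf_on S \<Longrightarrow> x \<in> S \<Longrightarrow> \<exists>g. local_rep S x f g"
  unfolding Cinf_on_def local_rep_def by blast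

lemma local_repE:
  assumes "local_rep S x f g"
  obtains U where "open U" "x \<in> U" "\<forall>y\<in>U \<inter> S. f y = g y" "smooth g"
  using assms unfolding local_rep_def by blast

lemma local_rep_at: "local_rep S x f g \<Longrightarrow> x \<in> S \<Longrightarrow> f x = g x"
  unfolding local_rep_def by blast

lemma local_rep_restrict0: "smooth g \<Longrightarrow> local_rep S x (restrict0 S g) g"
  unfolding local_rep_def restrict0_def by (auto intro!: exI[of _ UNIV])

lemma local_rep_binop:
  fixes x :: "'a::euclidean_space"
  assumes comb: "\<And>g k :: 'a \<Rightarrow> real. smooth g \<Longrightarrow> smooth k \<Longrightarrow> smooth (\<lambda>y. comb (g y) (k y))"
    and "local_rep S x f g" "local_rep S x h k"
  shows "local_rep S x (\<lambda>y. comb (f y) (h y)) (\<lambda>y. comb (g y) (k y))"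
proof -
  obtain U where U: "open U" "x \<in> U" "\<forall>y\<in>U \<inter> S. f y = g y" "smooth g"
    using assms(2) by (rule local_repE)
  obtain V where V: "open V" "x \<in> V" "\<forall>y\<in>V \<inter> S. h y = k y" "smooth k"
    using assms(3) by (rule local_repE)
  have "smooth (\<lambda>y. comb (g y) (k y))"
    using U(4) V(4) by (rule comb)
  then show ?thesis
    unfolding local_rep_def using U V by (intro conjI exI[of _ "U \<inter> V"]) auto
qed

lemma local_rep_add:
  "local_rep S x f g \<Longrightarrow> local_rep S x h k \<Longrightarrow> local_rep S x (\<lambda>y. f y + h y) (\<lambda>y. g y + k y)"
  by (rule local_rep_binop[where comb = "(+)", OF smooth_add])

lemma local_rep_mult:
  "local_rep S x f g \<Longrightarrow> local_rep S x h k \<Longrightarrow> local_rep S x (\<lambda>y. f y * h y) (\<lambda>y. g y * k y)"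
  by (rule local_rep_binop[where comb = "(*)", OF smooth_mult])

lemma local_rep_scaleR: "local_rep S x f g \<Longrightarrow> local_rep S x (\<lambda>y. c * f y) (\<lambda>y. c * g y)"
  unfolding local_rep_def by (auto intro: smooth_scaleR)

section \<open>Derivations are local\<close>

lemma derivation_at_add:
  "derivation_at A x v \<Longrightarrow> f \<in> A \<Longrightarrow> h \<in> A \<Longrightarrow> v (\<lambda>y. f y + h y) = v f + v h"
  unfolding derivation_at_def by blast

lemma derivation_at_scaleR:
  "derivation_at A x v \<Longrightarrow> f \<in> A \<Longrightarrow> v (\<lambda>y. c * f y) = c * v f"
  unfolding derivation_at_def by blast

lemma derivation_at_mult:
  "derivation_at A x v \<Longrightarrow> f \<in> A \<Longrightarrow> h \<in> A \<Longrightarrow> v (\<lambda>y. f y * h y) = v f * h x + f x * v h"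
  unfolding derivation_at_def by blast

lemma derivation_at_zero: "derivation_at A x v \<Longrightarrow> (\<lambda>y. 0) \<in> A \<Longrightarrow> v (\<lambda>y. 0) = 0"
  using derivation_at_scaleR[of A x v "\<lambda>y. 0" 0] by simp

lemma derivation_at_vanishing_near:
  fixes x :: "'a::euclidean_space"
  assumes v: "derivation_at A x v" and "RS S \<subseteq> A" and "x \<in> S" and "F \<in> A"
    and "open U" "x \<in> U" and F0: "\<forall>y\<in>U \<inter> S. F y = 0"
  shows "v F = 0"
proof -
  obtain r where r: "r > 0" "ball x r \<subseteq> U"
    using assms open_contains_ball by blast
  obtain \<phi> where \<phi>: "smooth \<phi>" "\<phi> x > 0" "\<And>y. dist y x \<ge> r \<Longrightarrow> \<phi> y = 0"
    using smooth_bump[OF r(1)] by blast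
  have \<phi>A: "restrict0 S \<phi> \<in> A" and zeroA: "(\<lambda>y. 0) \<in> A"
    using assms restrict0_in_RS[OF \<phi>(1)] restrict0_in_RS[OF smooth_const, of S 0]
    by (auto simp: restrict0_def)
  have "(\<lambda>y. restrict0 S \<phi> y * F y) = (\<lambda>y. 0)"
  proof
    fix y
    show "restrict0 S \<phi> y * F y = 0"
      using r F0 \<phi>(3)[of y] by (cases "y \<in> S \<and> dist y x < r") (auto simp: restrict0_def dist_commute)
  qed
  then have "0 = \<phi> x * v F"
    using derivation_at_mult[OF v \<phi>A \<open>F \<in> A\<close>] derivation_at_zero[OF v zeroA] F0 assms
    by (simp add: restrict0_def)
  then show ?thesis
    using \<phi>(2) by simp
qed

lemma derivation_at_locally_eq:
  fixes x :: "'a::euclidean_space"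
  assumes v: "derivation_at A x v" and "RS S \<subseteq> A" and "x \<in> S"
    and "h \<in> A" and diff: "(\<lambda>y. f y - h y) \<in> A"
    and "open U" "x \<in> U" and "\<forall>y\<in>U \<inter> S. f y = h y"
  shows "v f = v h"
proof -
  have "v (\<lambda>y. f y - h y) = 0"
    by (rule derivation_at_vanishing_near[OF v]) (use assms in auto)
  moreover have "v f = v (\<lambda>y. f y - h y) + v h"
    using derivation_at_add[OF v diff \<open>h \<in> A\<close>] by simp
  ultimately show ?thesis by simp
qed

section \<open>Extending a derivation from restrictions to all smooth functions on S\<close>

definition extend_derivation ::
  "'a::euclidean_space set \<Rightarrow> 'a \<Rightarrow> (('a \<Rightarrow> real) \<Rightarrow> real) \<Rightarrow> ('a \<Rightarrow> real) \<Rightarrow> real" where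
  "extend_derivation S x u f = u (restrict0 S (SOME g. local_rep S x f g))"

lemma extend_derivation_eq:
  assumes "x \<in> S" and u: "derivation_at (RS S) x u" and rep: "local_rep S x f g"
  shows "extend_derivation S x u f = u (restrict0 S g)"
proof -
  have rep_indep: "u (restrict0 S g1) = u (restrict0 S g2)"
    if rep1: "local_rep S x f g1" and rep2: "local_rep S x f g2" for g1 g2
  proof -
    obtain U1 where U1: "open U1" "x \<in> U1" "\<forall>y\<in>U1 \<inter> S. f y = g1 y" "smooth g1"
      using rep1 by (rule local_repE)
    obtain U2 where U2: "open U2" "x \<in> U2" "\<forall>y\<in>U2 \<inter> S. f y = g2 y" "smooth g2"
      using rep2 by (rule local_repE)
    have "(\<lambda>y. restrict0 S g1 y - restrict0 S g2 y) = restrict0 S (\<lambda>y. g1 y - g2 y)"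
      by (auto simp: restrict0_def)
    then have diff: "(\<lambda>y. restrict0 S g1 y - restrict0 S g2 y) \<in> RS S"
      using restrict0_in_RS[OF smooth_diff[OF U1(4) U2(4)]] by simp
    have "\<forall>y\<in>(U1 \<inter> U2) \<inter> S. restrict0 S g1 y = restrict0 S g2 y"
    proof
      fix y
      assume "y \<in> (U1 \<inter> U2) \<inter> S"
      then have "f y = g1 y" "f y = g2 y"
        using U1(3) U2(3) by blast+
      then show "restrict0 S g1 y = restrict0 S g2 y"
        by (simp add: restrict0_def)
    qed
    then show ?thesis
      using U1 U2 by (intro derivation_at_locally_eq[OF u subset_refl \<open>x \<in> S\<close>
          restrict0_in_RS[OF U2(4)] diff, of "U1 \<inter> U2"]) auto
  qed
  from rep have "local_rep S x f (SOME g. local_rep S x f g)"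
    by (rule someI[of "local_rep S x f"])
  then show ?thesis
    unfolding extend_derivation_def using rep by (rule rep_indep)
qed

lemma extend_derivation_RS:
  "x \<in> S \<Longrightarrow> derivation_at (RS S) x u \<Longrightarrow> f \<in> RS S \<Longrightarrow> extend_derivation S x u f = u f"
  by (auto simp: RS_eq extend_derivation_eq local_rep_restrict0)

lemma derivation_at_extend_derivation:
  assumes xS: "x \<in> S" and u: "derivation_at (RS S) x u"
  shows "derivation_at (Cinf_on S) x (extend_derivation S x u)"
  unfolding derivation_at_def
proof (intro conjI ballI allI)
  fix f h
  assume "f \<in> Cinf_on S" "h \<in> Cinf_on S"
  then obtain g k where g: "local_rep S x f g" and k: "local_rep S x h k"
    using Cinf_on_local_rep xS by blast
  then have gk: "restrict0 S g \<in> RS S" "restrict0 S k \<in> RS S"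
    unfolding local_rep_def by (auto intro: restrict0_in_RS)
  have ext: "extend_derivation S x u f = u (restrict0 S g)"
    "extend_derivation S x u h = u (restrict0 S k)"
    "extend_derivation S x u (\<lambda>y. f y + h y) = u (restrict0 S (\<lambda>y. g y + k y))"
    "extend_derivation S x u (\<lambda>y. f y * h y) = u (restrict0 S (\<lambda>y. g y * k y))"
    using extend_derivation_eq[OF xS u] g k local_rep_add[OF g k] local_rep_mult[OF g k] by blast+
  have "restrict0 S (\<lambda>y. g y + k y) = (\<lambda>y. restrict0 S g y + restrict0 S k y)"
    "restrict0 S (\<lambda>y. g y * k y) = (\<lambda>y. restrict0 S g y * restrict0 S k y)"
    by (auto simp: restrict0_def)
  moreover have "f x = restrict0 S g x" "h x = restrict0 S k x"
    using local_rep_at[OF g xS] local_rep_at[OF k xS] xS by (simp_all add: restrict0_def)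
  ultimately show "extend_derivation S x u (\<lambda>y. f y + h y)
      = extend_derivation S x u f + extend_derivation S x u h"
    and "extend_derivation S x u (\<lambda>y. f y * h y)
      = extend_derivation S x u f * h x + f x * extend_derivation S x u h"
    unfolding ext using derivation_at_add[OF u gk] derivation_at_mult[OF u gk] by simp_all
next
  fix c f
  assume "f \<in> Cinf_on S"
  then obtain g where g: "local_rep S x f g"
    using Cinf_on_local_rep xS by blast
  then have "restrict0 S g \<in> RS S"
    unfolding local_rep_def by (auto intro: restrict0_in_RS)
  moreover have "restrict0 S (\<lambda>y. c * g y) = (\<lambda>y. c * restrict0 S g y)"
    by (auto simp: restrict0_def)
  moreover have "extend_derivation S x u f = u (restrict0 S g)"
    "extend_derivation S x u (\<lambda>y. c * f y) = u (restrict0 S (\<lambda>y. c * g y))"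
    using extend_derivation_eq[OF xS u] g local_rep_scaleR[OF g] by blast+
  ultimately show "extend_derivation S x u (\<lambda>y. c * f y) = c * extend_derivation S x u f"
    using derivation_at_scaleR[OF u] by simp
qed

lemma extend_derivation_unique:
  assumes xS: "x \<in> S" and u: "derivation_at (RS S) x u"
    and w: "derivation_at (Cinf_on S) x w" and wu: "\<forall>f\<in>RS S. w f = u f"
    and f: "f \<in> Cinf_on S"
  shows "w f = extend_derivation S x u f"
proof -
  obtain g where g: "local_rep S x f g"
    using Cinf_on_local_rep[OF f xS] by blast
  then obtain U where U: "open U" "x \<in> U" "\<forall>y\<in>U \<inter> S. f y = g y" and "smooth g"
    by (rule local_repE)
  from \<open>smooth g\<close> have gR: "restrict0 S g \<in> RS S"
    by (rule restrict0_in_RS)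
  then have gC: "restrict0 S g \<in> Cinf_on S"
    using RS_subset_Cinf_on by blast
  have "w f = w (restrict0 S g)"
    by (rule derivation_at_locally_eq[OF w RS_subset_Cinf_on xS gC Cinf_on_diff[OF f gC] U(1,2)])
      (use U(3) in \<open>auto simp: restrict0_def\<close>)
  also have "\<dots> = extend_derivation S x u f"
    using wu gR extend_derivation_eq[OF xS u g] by simp
  finally show ?thesis .
qed

theorem mainTheorem3:
  fixes S :: "'a::euclidean_space set" and x :: 'a
    and u :: "('a \<Rightarrow> real) \<Rightarrow> real"
  assumes "x \<in> S"
    and "derivation_at (RS S) x u"
  shows "\<exists>w. derivation_at (Cinf_on S) x w \<and> (\<forall>f\<in>RS S. w f = u f) \<and>
           (\<forall>w'. derivation_at (Cinf_on S) x w' \<and> (\<forall>f\<in>RS S. w' f = u f)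
                 \<longrightarrow> (\<forall>f\<in>Cinf_on S. w' f = w f))"
  using derivation_at_extend_derivation[OF assms] extend_derivation_RS[OF assms]
    extend_derivation_unique[OF assms]
  by blast

end
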